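(* Let $M,N\in\mathbb{S}^{q+r}$. If there exists a real $\alpha\ge 0$ such that $M-\alpha N>0$, then $\mathcal{Z}_r(N)\subseteq\mathcal{Z}_r^+(M)$. Moreover, if $N\in\boldsymbol{\Pi}_{q,r}$ and $N_{22}<0$, then $\mathcal{Z}_r(N)\subseteq\mathcal{Z}_r^+(M)$ if and only if there exists a real $\alpha\ge 0$ such that $M-\alpha N>0$.
   Context: $\mathbb{S}^k$ denotes the real symmetric $k\times k$ matrices; for symmetric matrices, $A\ge 0$ ($A>0$) means positive semidefinite (definite), $A<0$ negative definite. $A^\dagger$ is the Moore–Penrose pseudo-inverse. Any $N\in\mathbb{S}^{q+r}$ is partitioned as $N=\begin{bmatrix}N_{11}&N_{12}\\ N_{21}&N_{22}\end{bmatrix}$ with $N_{11}\in\mathbb{S}^q$, $N_{22}\in\mathbb{S}^r$. The generalized Schur complement is $N\mid N_{22}:=N_{11}-N_{12}N_{22}^\dagger N_{21}$. The set $\boldsymbol{\Pi}_{q,r}$ consists of all $N\in\mathbb{S}^{q+r}$ with $N_{22}\le 0$, $N\mid N_{22}\ge 0$ and $\ker N_{22}\subseteq\ker N_{12}$. Define $\mathcal{Z}_r(\Pi)=\{Z\in\mathbb{R}^{r\times q}:\begin{bmatrix}I_q\\ Z\end{bmatrix}^\top\Pi\begin{bmatrix}I_q\\ Z\end{bmatrix}\ge 0\}$ and $\mathcal{Z}_r^+(\Pi)$ the same with $>0$. *)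

theory Defs
  imports "HOL-Analysis.Analysis"
begin

text \<open>The block index set of size q+r is the sum type 'q + 'r,
with Inl indexing the first q coordinates and Inr the last r.\<close>

definition sym_mat :: "real^'k^'k \<Rightarrow> bool" where
  "sym_mat A \<longleftrightarrow> transpose A = A"

definition psd :: "real^'k^'k \<Rightarrow> bool" where
  "psd A \<longleftrightarrow> sym_mat A \<and> (\<forall>x. 0 \<le> x \<bullet> (A *v x))"

definition pd :: "real^'k^'k \<Rightarrow> bool" where
  "pd A \<longleftrightarrow> sym_mat A \<and> (\<forall>x. x \<noteq> 0 \<longrightarrow> 0 < x \<bullet> (A *v x))"

definition nsd :: "real^'k^'k \<Rightarrow> bool" where
  "nsd A \<longleftrightarrow> psd (- A)"

definition nd :: "real^'k^'k \<Rightarrow> bool" where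
  "nd A \<longleftrightarrow> pd (- A)"

definition pinv :: "real^'n^'m \<Rightarrow> real^'m^'n" where
  "pinv A = (THE X. A ** X ** A = A \<and> X ** A ** X = X \<and>
       transpose (A ** X) = A ** X \<and> transpose (X ** A) = X ** A)"

definition blk11 :: "real^('q::finite+'r::finite)^('q+'r) \<Rightarrow> real^'q^'q" where
  "blk11 N = (\<chi> i j. N $ Inl i $ Inl j)"
definition blk12 :: "real^('q::finite+'r::finite)^('q+'r) \<Rightarrow> real^'r^'q" where
  "blk12 N = (\<chi> i j. N $ Inl i $ Inr j)"
definition blk21 :: "real^('q::finite+'r::finite)^('q+'r) \<Rightarrow> real^'q^'r" where
  "blk21 N = (\<chi> i j. N $ Inr i $ Inl j)"
definition blk22 :: "real^('q::finite+'r::finite)^('q+'r) \<Rightarrow> real^'r^'r" where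
  "blk22 N = (\<chi> i j. N $ Inr i $ Inr j)"

definition schur :: "real^('q::finite+'r::finite)^('q+'r) \<Rightarrow> real^'q^'q" where
  "schur N = blk11 N - blk12 N ** pinv (blk22 N) ** blk21 N"

definition PiSet :: "(real^('q::finite+'r::finite)^('q+'r)) set" where
  "PiSet = {N. sym_mat N \<and> nsd (blk22 N) \<and> psd (schur N) \<and>
     {x. blk22 N *v x = 0} \<subseteq> {x. blk12 N *v x = 0}}"

definition stackIZ :: "real^'q^'r \<Rightarrow> real^'q^('q+'r)" where
  "stackIZ Z = (\<chi> k. case k of Inl i \<Rightarrow> mat 1 $ i | Inr j \<Rightarrow> Z $ j)"

definition Zset :: "real^('q::finite+'r::finite)^('q+'r) \<Rightarrow> (real^'q^'r) set" where
  "Zset P = {Z. psd (transpose (stackIZ Z) ** P ** stackIZ Z)}"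

definition Zset_plus :: "real^('q::finite+'r::finite)^('q+'r) \<Rightarrow> (real^'q^'r) set" where
  "Zset_plus P = {Z. pd (transpose (stackIZ Z) ** P ** stackIZ Z)}"

end

theory Submission
  imports Defs
begin

text \<open>Sufficiency: on the graph of \<open>Z \<in> \<Z>\<^sub>r(N)\<close> the \<open>N\<close>-form is nonnegative, so there the
  \<open>M\<close>-form dominates the positive form of \<open>M - \<alpha>N\<close>.

  Necessity: as \<open>N\<^sub>2\<^sub>2\<close> is invertible, completing the square gives
  \<open>N(x, y) = x\<^sup>T(N | N\<^sub>2\<^sub>2)x + d\<^sup>T N\<^sub>2\<^sub>2 d\<close> with \<open>d = y + N\<^sub>2\<^sub>2\<^sup>-\<^sup>1N\<^sub>2\<^sub>1x\<close>. For a nonzero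
  \<open>w = (x, y)\<close> with \<open>N(w) \<ge> 0\<close>, a rank-one correction of \<open>-N\<^sub>2\<^sub>2\<^sup>-\<^sup>1N\<^sub>2\<^sub>1\<close> is a \<open>Z \<in> \<Z>\<^sub>r(N)\<close>
  whose graph passes through \<open>w\<close>, hence \<open>M(w) > 0\<close>. So \<open>M\<close> is positive on the nonzero part of
  the cone \<open>N \<ge> 0\<close>, and a strict S-lemma produces \<open>\<alpha>\<close>: if no multiplier exists, each pencil
  \<open>(1 - t)M - tN\<close>, \<open>0 \<le> t < 1\<close>, has a nonpositive direction \<open>w \<noteq> 0\<close>. The parameters admitting
  such a \<open>w\<close> with \<open>N(w) \<ge> 0\<close>, resp. with \<open>N(w) \<le> 0\<close> and \<open>M(w) \<le> 0\<close>, form two closed sets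
  covering the connected interval \<open>[0, 1)\<close>, neither of which contains all of it; at a common
  parameter an \<open>N\<close>-isotropic combination of the two witnesses contradicts the positivity of \<open>M\<close>.\<close>

definition quad_form :: "real^'n^'n \<Rightarrow> real^'n \<Rightarrow> real" where
  "quad_form A w = w \<bullet> (A *v w)"

definition strictly_positive_on_cone :: "real^'n^'n \<Rightarrow> real^'n^'n \<Rightarrow> bool" where
  "strictly_positive_on_cone M N \<longleftrightarrow> (\<forall>w. w \<noteq> 0 \<and> 0 \<le> quad_form N w \<longrightarrow> 0 < quad_form M w)"

lemma sym_mat_diff_scaleR: "sym_mat M \<Longrightarrow> sym_mat N \<Longrightarrow> sym_mat (a *\<^sub>R M - b *\<^sub>R N)"
  by (simp add: sym_mat_def transpose_def vec_eq_iff)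

lemma sym_mat_inner_commute: "sym_mat A \<Longrightarrow> x \<bullet> (A *v y) = y \<bullet> (A *v x)"
  by (metis dot_lmul_matrix inner_commute sym_mat_def transpose_transpose vector_transpose_matrix)

lemma pd_iff_quad_form: "pd A \<longleftrightarrow> sym_mat A \<and> (\<forall>w. w \<noteq> 0 \<longrightarrow> 0 < quad_form A w)"
  by (simp add: pd_def quad_form_def)

lemma quad_form_scaleR: "quad_form A (c *\<^sub>R w) = c^2 * quad_form A w"
  by (simp add: quad_form_def matrix_vector_mult_scaleR power2_eq_square)

lemma quad_form_diff_scaleR:
  "quad_form (a *\<^sub>R M - b *\<^sub>R N) w = a * quad_form M w - b * quad_form N w"
  by (simp add: quad_form_def matrix_vector_mult_diff_rdistrib scaleR_matrix_vector_assoc[symmetric]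
      inner_diff_right)

lemma quad_form_add_scaleR:
  assumes "sym_mat A"
  shows "quad_form A (u + r *\<^sub>R v) = quad_form A u + 2 * r * (u \<bullet> (A *v v)) + r^2 * quad_form A v"
  using sym_mat_inner_commute[OF assms, of v u]
  by (simp add: quad_form_def matrix_vector_right_distrib matrix_vector_mult_scaleR inner_add_left
      inner_add_right power2_eq_square algebra_simps)

lemmas continuous_on_matrix_vector_mult [continuous_intros] =
  bounded_linear.continuous_on[OF matrix_vector_mul_bounded_linear]

text \<open>The condition on \<open>w\<close> is invariant under positive scaling, so \<open>w\<close> may be taken on the
  compact unit sphere.\<close>
lemma closed_pencil_witnesses:
  fixes M N :: "real^'n^'n"
  shows "closed {t. 0 \<le> t \<and> t \<le> 1 \<and> (\<exists>w. w \<noteq> 0 \<and> 0 \<le> a * quad_form N w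
             \<and> 0 \<le> b * quad_form M w \<and> (1 - t) * quad_form M w \<le> t * quad_form N w)}"
    (is "closed {t. _ \<and> _ \<and> (\<exists>w. w \<noteq> 0 \<and> ?P w t)}")
proof -
  define C where "C = {p :: (real^'n) \<times> real. 0 \<le> snd p \<and> snd p \<le> 1 \<and> ?P (fst p) (snd p)}"
  have "closed C"
    unfolding C_def quad_form_def by (intro closed_Collect_conj closed_Collect_le continuous_intros)
  then have "closed {t. \<exists>u. u \<in> sphere 0 1 \<and> (u, t) \<in> C}"
    by (intro closed_compact_projection) auto
  moreover have normalize: "?P (w /\<^sub>R norm w) t" if "w \<noteq> 0" "?P w t" for w t
  proof -
    have k: "0 < (inverse (norm w))^2" using that by simp
    have "0 \<le> x * ((inverse (norm w))^2 * y) \<longleftrightarrow> 0 \<le> x * y" for x y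
      using k by (simp add: mult.left_commute[of x] zero_le_mult_iff)
    moreover have "x * ((inverse (norm w))^2 * y) \<le> z * ((inverse (norm w))^2 * u) \<longleftrightarrow> x * y \<le> z * u"
      for x y z u
      using k by (simp add: mult.left_commute[of _ "(inverse (norm w))^2"])
    ultimately show ?thesis using that(2) by (simp only: quad_form_scaleR)
  qed
  have "{t. 0 \<le> t \<and> t \<le> 1 \<and> (\<exists>w. w \<noteq> 0 \<and> ?P w t)} = {t. \<exists>u. u \<in> sphere 0 1 \<and> (u, t) \<in> C}"
  proof (rule set_eqI, rule iffI)
    fix t assume "t \<in> {t. 0 \<le> t \<and> t \<le> 1 \<and> (\<exists>w. w \<noteq> 0 \<and> ?P w t)}"
    then obtain w where "0 \<le> t" "t \<le> 1" "w \<noteq> 0" "?P w t" by blast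
    with normalize[of w t] have "w /\<^sub>R norm w \<in> sphere 0 1 \<and> (w /\<^sub>R norm w, t) \<in> C"
      by (simp only: C_def mem_Collect_eq fst_conv snd_conv) simp
    then show "t \<in> {t. \<exists>u. u \<in> sphere 0 1 \<and> (u, t) \<in> C}" by blast
  next
    fix t assume "t \<in> {t. \<exists>u. u \<in> sphere 0 1 \<and> (u, t) \<in> C}"
    then obtain u where "norm u = 1" "(u, t) \<in> C" by auto
    then show "t \<in> {t. 0 \<le> t \<and> t \<le> 1 \<and> (\<exists>w. w \<noteq> 0 \<and> ?P w t)}"
      by (auto simp: C_def intro!: exI[of _ u])
  qed
  ultimately show ?thesis by simp
qed

lemma quadratic_root_of_sign:
  fixes c0 c1 c2 :: real
  assumes "c0 < 0" "0 < c2"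
  shows "\<exists>r. c0 + 2 * r * c1 + r^2 * c2 = 0 \<and> r * b \<le> 0"
proof -
  define s where "s = sqrt (c1^2 - c0 * c2)"
  have disc: "c1^2 < c1^2 - c0 * c2" using assms by (simp add: mult_neg_pos)
  then have s2: "s^2 = c1^2 - c0 * c2" unfolding s_def
    by (metis less_le_not_le nle_le order_trans real_sqrt_pow2 zero_le_power2)
  have s_gt: "\<bar>c1\<bar> < s" unfolding s_def using disc by (metis real_sqrt_abs real_sqrt_less_mono)
  have root: "c0 + 2 * r * c1 + r^2 * c2 = 0" if "r = (- c1 + e * s) / c2" "e^2 = 1" for r e
  proof -
    have "c2 * (c0 + 2 * r * c1 + r^2 * c2) = c0 * c2 + 2 * (c2 * r) * c1 + (c2 * r)^2"
      by (simp add: algebra_simps power2_eq_square)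
    also have "c2 * r = - c1 + e * s" using that assms by simp
    also have "c0 * c2 + 2 * (- c1 + e * s) * c1 + (- c1 + e * s)^2 = c0 * c2 + e^2 * s^2 - c1^2"
      by (simp add: algebra_simps power2_eq_square)
    also have "\<dots> = 0" using that s2 by simp
    finally show ?thesis using assms by simp
  qed
  show ?thesis
  proof (cases "0 \<le> b")
    case True
    have "(- c1 - s) / c2 \<le> 0" using s_gt assms by (intro divide_nonpos_pos) auto
    then have "(- c1 - s) / c2 * b \<le> 0" using True by (rule mult_nonpos_nonneg)
    with root[of _ "-1"] show ?thesis by fastforce
  next
    case False
    have "0 \<le> (- c1 + s) / c2" using s_gt assms by (intro divide_nonneg_pos) auto
    then have "(- c1 + s) / c2 * b \<le> 0" using False by (intro mult_nonneg_nonpos) auto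
    with root[of _ 1] show ?thesis by fastforce
  qed
qed

lemma pencil_not_nonpos_across_cone:
  assumes sM: "sym_mat M" and sN: "sym_mat N" and pos: "strictly_positive_on_cone M N"
    and "0 < p" and "w1 \<noteq> 0" and "w2 \<noteq> 0"
    and N1: "quad_form N w1 \<le> 0" and N2: "0 \<le> quad_form N w2"
    and F1: "p * quad_form M w1 \<le> q * quad_form N w1"
    and F2: "p * quad_form M w2 \<le> q * quad_form N w2"
  shows False
proof -
  have M_pos: "0 < quad_form M w" if "w \<noteq> 0" "0 \<le> quad_form N w" for w
    using pos that by (simp add: strictly_positive_on_cone_def)
  have N1_neg: "quad_form N w1 < 0"
  proof (rule ccontr)
    assume "\<not> ?thesis"
    with N1 have "quad_form N w1 = 0" by simp
    with M_pos[OF \<open>w1 \<noteq> 0\<close>] F1 \<open>0 < p\<close> show False by (simp add: mult_le_0_iff)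
  qed
  have N2_pos: "0 < quad_form N w2"
  proof (rule ccontr)
    assume "\<not> ?thesis"
    with N2 have "quad_form N w2 = 0" by simp
    with M_pos[OF \<open>w2 \<noteq> 0\<close>] F2 \<open>0 < p\<close> show False by (simp add: mult_le_0_iff)
  qed
  define F where "F = p *\<^sub>R M - q *\<^sub>R N"
  have sF: "sym_mat F" unfolding F_def using sM sN by (rule sym_mat_diff_scaleR)
  have F: "quad_form F w = p * quad_form M w - q * quad_form N w" for w
    by (simp add: F_def quad_form_diff_scaleR)
  txt \<open>Move from \<open>w1\<close> towards \<open>w2\<close> until the \<open>N\<close>-form vanishes, choosing the direction
    in which the cross term of \<open>F\<close> does not increase \<open>F\<close>.\<close>
  obtain r where r: "quad_form N w1 + 2 * r * (w1 \<bullet> (N *v w2)) + r^2 * quad_form N w2 = 0"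
    and r_cross: "r * (w1 \<bullet> (F *v w2)) \<le> 0"
    using quadratic_root_of_sign[OF N1_neg N2_pos] by blast
  define w where "w = w1 + r *\<^sub>R w2"
  have Nw: "quad_form N w = 0" using r by (simp add: w_def quad_form_add_scaleR[OF sN])
  have "quad_form F w = quad_form F w1 + 2 * (r * (w1 \<bullet> (F *v w2))) + r^2 * quad_form F w2"
    by (simp add: w_def quad_form_add_scaleR[OF sF])
  also have "\<dots> \<le> 0"
  proof -
    have "quad_form F w1 \<le> 0" "quad_form F w2 \<le> 0" using F F1 F2 by auto
    moreover from this(2) have "r^2 * quad_form F w2 \<le> 0" by (simp add: mult_nonneg_nonpos)
    ultimately show ?thesis using r_cross by linarith
  qed
  finally have "quad_form M w \<le> 0" using F[of w] Nw \<open>0 < p\<close> by (simp add: mult_le_0_iff)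
  moreover have "w \<noteq> 0"
  proof
    assume "w = 0"
    then have "w1 = (- r) *\<^sub>R w2" by (simp add: w_def eq_neg_iff_add_eq_0)
    then have "quad_form N w1 = r^2 * quad_form N w2" by (simp only: quad_form_scaleR) simp
    moreover have "0 \<le> r^2 * quad_form N w2" using N2_pos by simp
    ultimately show False using N1_neg by linarith
  qed
  ultimately show False using M_pos Nw by force
qed

theorem strict_S_lemma:
  fixes M N :: "real^'n^'n"
  assumes sM: "sym_mat M" and sN: "sym_mat N" and pos: "strictly_positive_on_cone M N"
  shows "\<exists>\<alpha>\<ge>0. pd (M - \<alpha> *\<^sub>R N)"
proof (rule ccontr)
  assume no_multiplier: "\<not> ?thesis"
  define SA where "SA = {t::real. 0 \<le> t \<and> t \<le> 1 \<and> (\<exists>w. w \<noteq> 0 \<and> 0 \<le> 1 * quad_form N w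
    \<and> 0 \<le> 0 * quad_form M w \<and> (1 - t) * quad_form M w \<le> t * quad_form N w)}"
  define SB where "SB = {t::real. 0 \<le> t \<and> t \<le> 1 \<and> (\<exists>w. w \<noteq> 0 \<and> 0 \<le> (-1) * quad_form N w
    \<and> 0 \<le> (-1) * quad_form M w \<and> (1 - t) * quad_form M w \<le> t * quad_form N w)}"
  have "closed SA" "closed SB" unfolding SA_def SB_def by (rule closed_pencil_witnesses)+
  have cover: "{0..<1} \<subseteq> SA \<union> SB"
  proof
    fix t :: real assume t: "t \<in> {0..<1}"
    define \<beta> where "\<beta> = t / (1 - t)"
    have "0 \<le> \<beta>" using t by (simp add: \<beta>_def)
    then have "\<not> pd (1 *\<^sub>R M - \<beta> *\<^sub>R N)" using no_multiplier by auto
    then obtain w where "w \<noteq> 0" and "\<not> 0 < quad_form (1 *\<^sub>R M - \<beta> *\<^sub>R N) w"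
      using sym_mat_diff_scaleR[OF sM sN] unfolding pd_iff_quad_form by blast
    then have le: "quad_form M w \<le> \<beta> * quad_form N w" unfolding quad_form_diff_scaleR by simp
    have "(1 - t) * quad_form M w \<le> (1 - t) * (\<beta> * quad_form N w)"
      using t le by (intro mult_left_mono) auto
    also have "\<dots> = t * quad_form N w" using t by (simp add: \<beta>_def)
    finally have pencil: "(1 - t) * quad_form M w \<le> t * quad_form N w" .
    show "t \<in> SA \<union> SB"
    proof (cases "0 \<le> quad_form N w")
      case True
      then show ?thesis using t \<open>w \<noteq> 0\<close> pencil by (auto simp: SA_def)
    next
      case False
      then have "\<beta> * quad_form N w \<le> 0" using \<open>0 \<le> \<beta>\<close> by (simp add: mult_nonneg_nonpos)
      then have "quad_form M w \<le> 0" using le by linarith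
      then show ?thesis using False t \<open>w \<noteq> 0\<close> pencil by (auto simp: SB_def)
    qed
  qed
  have "SA \<inter> SB \<inter> {0..<1} = {}"
  proof (intro equals0I)
    fix c assume "c \<in> SA \<inter> SB \<inter> {0..<1}"
    then obtain w1 w2 where "c < 1" "w1 \<noteq> 0" "w2 \<noteq> 0"
      "quad_form N w1 \<le> 0" "(1 - c) * quad_form M w1 \<le> c * quad_form N w1"
      "0 \<le> quad_form N w2" "(1 - c) * quad_form M w2 \<le> c * quad_form N w2"
      unfolding SA_def SB_def by auto
    then show False using pencil_not_nonpos_across_cone[OF sM sN pos, of "1 - c"] by simp
  qed
  then have "SA \<inter> {0..<1} = {} \<or> SB \<inter> {0..<1} = {}"
    using connected_closedD[OF connected_Ico] cover \<open>closed SA\<close> \<open>closed SB\<close> by blast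
  moreover have "0 \<notin> SA" "1 \<notin> SB"
    using pos unfolding SA_def SB_def strictly_positive_on_cone_def by (auto simp: not_less)
  moreover have "1 \<in> SB" if "{0..<1} \<subseteq> SB"
    using closure_minimal[OF that \<open>closed SB\<close>] by auto
  moreover have "(0::real) \<in> {0..<1}" by simp
  ultimately show False using cover by blast
qed

definition block_vec :: "real^'q \<Rightarrow> real^'r \<Rightarrow> real^('q::finite+'r::finite)" where
  "block_vec x y = (\<chi> k. case k of Inl i \<Rightarrow> x$i | Inr j \<Rightarrow> y$j)"

lemma sum_UNIV_Plus:
  "(\<Sum>k\<in>UNIV. f k) = (\<Sum>i\<in>UNIV. f (Inl i)) + (\<Sum>j\<in>UNIV. f (Inr j :: 'q::finite + 'r::finite))"
  using sum.Plus[of "UNIV::'q set" "UNIV::'r set" f] by (simp add: o_def)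

lemma inner_block_vec: "block_vec a b \<bullet> block_vec c d = a \<bullet> c + b \<bullet> d"
  by (simp add: inner_vec_def sum_UNIV_Plus block_vec_def)

lemma matrix_vector_mult_block_vec:
  fixes N :: "real^('q::finite+'r::finite)^('q+'r)"
  shows "N *v block_vec x y = block_vec (blk11 N *v x + blk12 N *v y) (blk21 N *v x + blk22 N *v y)"
  by (auto simp: vec_eq_iff block_vec_def matrix_vector_mult_def sum_UNIV_Plus blk11_def blk12_def
      blk21_def blk22_def split: sum.splits)

lemma block_vec_components: "block_vec (\<chi> i. w$Inl i) (\<chi> j. w$Inr j) = w"
  by (auto simp: vec_eq_iff block_vec_def split: sum.splits)

lemma block_vec_eq_0_iff: "block_vec x y = 0 \<longleftrightarrow> x = 0 \<and> y = 0"
  by (auto simp: vec_eq_iff block_vec_def split: sum.splits)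

lemma stackIZ_mult: "stackIZ Z *v x = block_vec x (Z *v x)"
proof -
  have "(stackIZ Z *v x) $ k = block_vec x (Z *v x) $ k" for k
  proof (cases k)
    case (Inl i)
    have "(stackIZ Z *v x) $ k = (mat 1 *v x) $ i"
      by (simp add: Inl stackIZ_def matrix_vector_mult_def)
    then show ?thesis by (simp add: Inl block_vec_def)
  qed (simp add: stackIZ_def matrix_vector_mult_def block_vec_def)
  then show ?thesis by (simp add: vec_eq_iff)
qed

lemma quad_form_congruence: "x \<bullet> ((transpose T ** P ** T) *v x) = quad_form P (T *v x)"
proof -
  have "x \<bullet> ((transpose T ** P ** T) *v x) = x \<bullet> ((P *v (T *v x)) v* T)"
    by (simp add: matrix_vector_mul_assoc[symmetric])
  also have "\<dots> = (P *v (T *v x)) \<bullet> (T *v x)"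
    by (metis inner_commute dot_lmul_matrix)
  finally show ?thesis by (simp add: quad_form_def inner_commute)
qed

lemma sym_mat_congruence: "sym_mat P \<Longrightarrow> sym_mat (transpose T ** P ** T)"
  by (simp add: sym_mat_def matrix_transpose_mul matrix_mul_assoc)

lemma Zset_iff: "sym_mat P \<Longrightarrow> Z \<in> Zset P \<longleftrightarrow> (\<forall>x. 0 \<le> quad_form P (block_vec x (Z *v x)))"
  by (simp add: Zset_def psd_def sym_mat_congruence quad_form_congruence stackIZ_mult)

lemma Zset_plus_iff:
  "sym_mat P \<Longrightarrow> Z \<in> Zset_plus P \<longleftrightarrow> (\<forall>x. x \<noteq> 0 \<longrightarrow> 0 < quad_form P (block_vec x (Z *v x)))"
  by (simp add: Zset_plus_def pd_def sym_mat_congruence quad_form_congruence stackIZ_mult)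

lemma inner_blk12_blk21:
  fixes N :: "real^('q::finite+'r::finite)^('q+'r)"
  assumes "sym_mat N"
  shows "x \<bullet> (blk12 N *v y) = y \<bullet> (blk21 N *v x)"
  using sym_mat_inner_commute[OF assms, of "block_vec x 0" "block_vec 0 y"]
  by (simp add: matrix_vector_mult_block_vec inner_block_vec)

lemma inner_blk22_commute:
  fixes N :: "real^('q::finite+'r::finite)^('q+'r)"
  assumes "sym_mat N"
  shows "z \<bullet> (blk22 N *v y) = y \<bullet> (blk22 N *v z)"
  using sym_mat_inner_commute[OF assms, of "block_vec (0::real^'q) z" "block_vec 0 y"]
  by (simp add: matrix_vector_mult_block_vec inner_block_vec)

lemma quad_form_block_vec:
  fixes N :: "real^('q::finite+'r::finite)^('q+'r)"
  assumes "sym_mat N"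
  shows "quad_form N (block_vec x y)
    = x \<bullet> (blk11 N *v x) + 2 * (y \<bullet> (blk21 N *v x)) + y \<bullet> (blk22 N *v y)"
  using inner_blk12_blk21[OF assms, of x y]
  by (simp add: quad_form_def matrix_vector_mult_block_vec inner_block_vec inner_add_right)

lemma matrix_vector_mult_uminus: "(- A) *v x = - (A *v (x::real^'n))"
  by (simp add: vec_eq_iff matrix_vector_mult_def sum_negf)

lemma nd_inner_neg: "nd A \<Longrightarrow> x \<noteq> 0 \<Longrightarrow> x \<bullet> (A *v x) < 0"
  by (simp add: nd_def pd_def matrix_vector_mult_uminus)

lemma pinv_eq_inverse:
  fixes A :: "real^'n^'n"
  assumes "A ** B = mat 1" "B ** A = mat 1"
  shows "pinv A = B"
  unfolding pinv_def
proof (rule the_equality)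
  fix X assume X: "A ** X ** A = A \<and> X ** A ** X = X \<and> transpose (A ** X) = A ** X
    \<and> transpose (X ** A) = X ** A"
  have "B ** (A ** X ** A) ** B = (B ** A) ** X ** (A ** B)" by (simp add: matrix_mul_assoc)
  then show "X = B" using X assms by simp
qed (use assms in \<open>simp add: transpose_mat\<close>)

lemma nd_invertible:
  fixes A :: "real^'n^'n"
  assumes "nd A"
  obtains B where "A ** B = mat 1" "B ** A = mat 1"
proof -
  have "\<forall>x. A *v x = 0 \<longrightarrow> x = 0" using nd_inner_neg[OF assms] by force
  then obtain B where "B ** A = mat 1" using matrix_left_invertible_ker by blast
  then show ?thesis using that matrix_left_right_inverse by blast
qed

lemma quad_form_block_vec_schur:
  fixes N :: "real^('q::finite+'r::finite)^('q+'r)"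
  assumes sN: "sym_mat N" and Ni: "blk22 N ** Ni = mat 1" "Ni ** blk22 N = mat 1"
  shows "quad_form N (block_vec x y) = x \<bullet> (schur N *v x)
     + (y + Ni *v (blk21 N *v x)) \<bullet> (blk22 N *v (y + Ni *v (blk21 N *v x)))"
proof -
  define p where "p = Ni *v (blk21 N *v x)"
  have Np: "blk22 N *v p = blk21 N *v x"
    by (simp add: p_def matrix_vector_mul_assoc matrix_mul_assoc Ni)
  have S: "schur N *v x = blk11 N *v x - blk12 N *v p"
    by (simp add: schur_def pinv_eq_inverse[OF Ni] p_def matrix_vector_mult_diff_rdistrib
        matrix_vector_mul_assoc matrix_mul_assoc)
  have e1: "x \<bullet> (blk12 N *v p) = p \<bullet> (blk21 N *v x)" by (rule inner_blk12_blk21[OF sN])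
  have e2: "p \<bullet> (blk22 N *v y) = y \<bullet> (blk21 N *v x)" using inner_blk22_commute[OF sN, of p y] Np by simp
  show ?thesis
    unfolding quad_form_block_vec[OF sN] p_def[symmetric] S
    by (simp add: matrix_vector_right_distrib inner_add_left inner_add_right inner_diff_right Np e1 e2)
qed

lemma psd_cauchy_schwarz:
  fixes S :: "real^'n^'n"
  assumes "psd S" "0 < x \<bullet> (S *v x)"
  shows "(u \<bullet> (S *v x))^2 \<le> (u \<bullet> (S *v u)) * (x \<bullet> (S *v x))"
proof -
  have sS: "sym_mat S" using assms(1) by (simp add: psd_def)
  define sx where "sx = x \<bullet> (S *v x)"
  define t where "t = - (u \<bullet> (S *v x)) / sx"
  have "0 \<le> quad_form S (u + t *\<^sub>R x)" using assms(1) by (simp add: psd_def quad_form_def)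
  also have "\<dots> = quad_form S u + 2 * t * (u \<bullet> (S *v x)) + t^2 * sx"
    using quad_form_add_scaleR[OF sS, of u t x] by (simp add: quad_form_def sx_def)
  also have "\<dots> = quad_form S u - (u \<bullet> (S *v x))^2 / sx"
    using assms(2) by (simp add: t_def sx_def power2_eq_square field_simps)
  finally show ?thesis using assms(2) by (simp add: sx_def quad_form_def pos_divide_le_eq)
qed

lemma psd_rank_one_update_nonneg:
  fixes S :: "real^'n^'n"
  assumes "psd S" and "- (x \<bullet> (S *v x)) \<le> \<gamma>"
  shows "0 \<le> u \<bullet> (S *v u) + ((u \<bullet> (S *v x)) / (x \<bullet> (S *v x)))^2 * \<gamma>"
proof (cases "x \<bullet> (S *v x) = 0")
  case True
  then show ?thesis using assms(1) by (simp add: psd_def)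
next
  case False
  define sx where "sx = x \<bullet> (S *v x)"
  have "0 < sx" using assms(1) False by (simp add: psd_def sx_def order_less_le)
  have "((u \<bullet> (S *v x)) / sx)^2 * (- sx) \<le> ((u \<bullet> (S *v x)) / sx)^2 * \<gamma>"
    using assms(2) by (intro mult_left_mono) (auto simp: sx_def)
  moreover have "((u \<bullet> (S *v x)) / sx)^2 * sx = (u \<bullet> (S *v x))^2 / sx"
    using \<open>0 < sx\<close> by (simp add: power2_eq_square)
  moreover have "(u \<bullet> (S *v x))^2 / sx \<le> u \<bullet> (S *v u)"
    using psd_cauchy_schwarz[OF assms(1), of x u] \<open>0 < sx\<close> by (simp add: sx_def pos_divide_le_eq)
  ultimately show ?thesis by (simp add: sx_def)
qed

lemma outer_mult_vector: "(\<chi> i j. d$i * v$j) *v u = (v \<bullet> u) *\<^sub>R (d::real^'m)"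
  by (simp add: vec_eq_iff matrix_vector_mult_def inner_vec_def sum_distrib_left sum_distrib_right
      mult.commute mult.left_commute)

lemma Zset_graph_through_point:
  fixes N :: "real^('q::finite+'r::finite)^('q+'r)"
  assumes sN: "sym_mat N" and psd_schur: "psd (schur N)" and nd22: "nd (blk22 N)"
    and nonneg: "0 \<le> quad_form N (block_vec x y)"
  obtains Z where "Z \<in> Zset N" and "Z *v x = y"
proof -
  obtain Ni where Ni: "blk22 N ** Ni = mat 1" "Ni ** blk22 N = mat 1" using nd_invertible[OF nd22] .
  define S where "S = schur N"
  define sx where "sx = x \<bullet> (S *v x)"
  define d where "d = y + Ni *v (blk21 N *v x)"
  define \<gamma> where "\<gamma> = d \<bullet> (blk22 N *v d)"
  have "quad_form N (block_vec x y) = sx + \<gamma>"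
    unfolding quad_form_block_vec_schur[OF sN Ni] by (simp add: sx_def S_def \<gamma>_def d_def)
  then have \<gamma>_lower: "- sx \<le> \<gamma>" using nonneg by simp
  have d0: "d = 0" if "sx = 0"
    using nd_inner_neg[OF nd22, of d] \<gamma>_lower that by (force simp: \<gamma>_def)
  txt \<open>On the graph of \<open>-N\<^sub>2\<^sub>2\<^sup>-\<^sup>1N\<^sub>2\<^sub>1\<close> the \<open>N\<close>-form is the Schur form; the rank-one term
    \<open>d v\<^sup>T\<close> moves the graph through \<open>(x, y)\<close> and costs at most what \<open>psd_cauchy_schwarz\<close> allows.\<close>
  define v where "v = (1 / sx) *\<^sub>R (S *v x)"
  define Z where "Z = (\<chi> i j. d$i * v$j) - Ni ** blk21 N"
  have Zu: "Z *v u + Ni *v (blk21 N *v u) = (v \<bullet> u) *\<^sub>R d" for u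
    by (simp add: Z_def matrix_vector_mult_diff_rdistrib outer_mult_vector matrix_vector_mul_assoc)
  have "Z *v x = y"
  proof (cases "sx = 0")
    case True
    then have "Z *v x + Ni *v (blk21 N *v x) = y + Ni *v (blk21 N *v x)"
      using Zu[of x] d0 by (simp add: d_def)
    then show ?thesis by simp
  next
    case False
    then have "v \<bullet> x = 1" by (simp add: v_def sx_def inner_commute)
    then show ?thesis using Zu[of x] by (simp add: d_def)
  qed
  moreover have "Z \<in> Zset N"
    unfolding Zset_iff[OF sN]
  proof
    fix u
    have "v \<bullet> u = (u \<bullet> (S *v x)) / sx" by (simp add: v_def inner_commute)
    then have "quad_form N (block_vec u (Z *v u)) = u \<bullet> (S *v u) + ((u \<bullet> (S *v x)) / sx)^2 * \<gamma>"
      unfolding quad_form_block_vec_schur[OF sN Ni] Zu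
      by (simp add: S_def \<gamma>_def matrix_vector_mult_scaleR power2_eq_square)
    also have "0 \<le> \<dots>"
      using psd_rank_one_update_nonneg[OF psd_schur] \<gamma>_lower by (simp add: S_def sx_def)
    finally show "0 \<le> quad_form N (block_vec u (Z *v u))" .
  qed
  ultimately show ?thesis using that by blast
qed

lemma strictly_positive_on_cone_if_Zset_subset:
  fixes M N :: "real^('q::finite+'r::finite)^('q+'r)"
  assumes sM: "sym_mat M" and sN: "sym_mat N" and "psd (schur N)" and nd22: "nd (blk22 N)"
    and subset: "Zset N \<subseteq> Zset_plus M"
  shows "strictly_positive_on_cone M N"
  unfolding strictly_positive_on_cone_def
proof (intro allI impI, elim conjE)
  fix w assume "w \<noteq> 0" and nonneg: "0 \<le> quad_form N w"
  define x where "x = (\<chi> i. w$Inl i)"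
  define y where "y = (\<chi> j. w$Inr j)"
  have w: "w = block_vec x y" unfolding x_def y_def block_vec_components ..
  have "x \<noteq> 0"
  proof
    assume "x = 0"
    then have "y \<noteq> 0" using \<open>w \<noteq> 0\<close> w block_vec_eq_0_iff by blast
    then have "quad_form N w < 0"
      using nd_inner_neg[OF nd22] by (simp add: w \<open>x = 0\<close> quad_form_block_vec[OF sN])
    with nonneg show False by simp
  qed
  obtain Z where "Z \<in> Zset N" "Z *v x = y"
    using Zset_graph_through_point[OF sN \<open>psd (schur N)\<close> nd22] nonneg w by blast
  with subset \<open>x \<noteq> 0\<close> show "0 < quad_form M w" by (auto simp: Zset_plus_iff[OF sM] w)
qed

lemma Zset_subset_Zset_plus_if_pd:
  fixes M N :: "real^('q::finite+'r::finite)^('q+'r)"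
  assumes sM: "sym_mat M" and sN: "sym_mat N" and "0 \<le> \<alpha>" and "pd (M - \<alpha> *\<^sub>R N)"
  shows "Zset N \<subseteq> Zset_plus M"
proof
  fix Z assume "Z \<in> Zset N"
  then have Z: "0 \<le> quad_form N (block_vec x (Z *v x))" for x using Zset_iff[OF sN] by blast
  show "Z \<in> Zset_plus M" unfolding Zset_plus_iff[OF sM]
  proof (intro allI impI)
    fix x :: "real^'q" assume "x \<noteq> 0"
    then have "0 < quad_form (M - \<alpha> *\<^sub>R N) (block_vec x (Z *v x))"
      using \<open>pd (M - \<alpha> *\<^sub>R N)\<close> by (simp add: pd_iff_quad_form block_vec_eq_0_iff)
    moreover have "0 \<le> \<alpha> * quad_form N (block_vec x (Z *v x))" using Z \<open>0 \<le> \<alpha>\<close> by simp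
    ultimately show "0 < quad_form M (block_vec x (Z *v x))"
      using quad_form_diff_scaleR[of 1 M \<alpha> N] by simp
  qed
qed

theorem mainTheorem10:
  fixes M N :: "real^('q::finite + 'r::finite)^('q + 'r)"
  assumes "sym_mat M" and "sym_mat N"
  shows "((\<exists>\<alpha>::real. \<alpha> \<ge> 0 \<and> pd (M - \<alpha> *\<^sub>R N)) \<longrightarrow> Zset N \<subseteq> Zset_plus M)
     \<and> ((N \<in> PiSet \<and> nd (blk22 N)) \<longrightarrow>
          (Zset N \<subseteq> Zset_plus M \<longleftrightarrow> (\<exists>\<alpha>::real. \<alpha> \<ge> 0 \<and> pd (M - \<alpha> *\<^sub>R N))))"
proof -
  have sufficient: "Zset N \<subseteq> Zset_plus M" if "\<exists>\<alpha>\<ge>0. pd (M - \<alpha> *\<^sub>R N)"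
    using that Zset_subset_Zset_plus_if_pd[OF assms] by blast
  have necessary: "\<exists>\<alpha>\<ge>0. pd (M - \<alpha> *\<^sub>R N)"
    if "N \<in> PiSet" "nd (blk22 N)" "Zset N \<subseteq> Zset_plus M"
  proof -
    have "psd (schur N)" using \<open>N \<in> PiSet\<close> by (simp add: PiSet_def)
    then have "strictly_positive_on_cone M N"
      using strictly_positive_on_cone_if_Zset_subset assms that(2,3) by blast
    with assms show ?thesis by (rule strict_S_lemma)
  qed
  show ?thesis using sufficient necessary by blast
qed

end
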